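(* Let $k\ge 2$, let $H_0$ be a finite $k$-uniform hypergraph and let $(H_t)_{t\ge0}$ be the ILTH hypergraphs generated from $H_0$. If $H_0$ contains a motif of type $i\in\{13,14,15,24,25\}$ that contains $m$ vertices, then motifs of type $i$ occur at least $(m+1)^t$ times in $H_t$, for every $t\ge0$.
   Context: A $k$-uniform hypergraph has every hyperedge a $k$-element subset of the vertex set. The ILTH process: given $H_t$, form $H_{t+1}$ by adding for each vertex $x\in V(H_t)$ a new vertex $x'$ (its clone), and taking $E(H_{t+1})=E(H_t)\cup\{(e\setminus\{x\})\cup\{x'\} : e\in E(H_t),\ x\in e\}$. A motif consists of three distinct hyperedges $e_1,e_2,e_3$; the vertices it contains are those of $e_1\cup e_2\cup e_3$. Its type is the binary string $i_1\dots i_7$ where $i_j=1$ iff the $j$-th of the regions $e_1\setminus(e_2\cup e_3)$, $e_2\setminus(e_1\cup e_3)$, $e_3\setminus(e_1\cup e_2)$, $(e_1\cap e_2)\setminus e_3$, $(e_2\cap e_3)\setminus e_1$, $(e_1\cap e_3)\setminus e_2$, $e_1\cap e_2\cap e_3$ is nonempty, up to relabelling of $e_1,e_2,e_3$. The types are: type 13 $=0001111$, type 14 $=1001111$, type 15 $=1011111$, type 24 $=1001110$, type 25 $=1011110$. *)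

theory Defs
  imports Main
begin

definition k_uniform_hypergraph :: "nat \<Rightarrow> 'v set \<Rightarrow> 'v set set \<Rightarrow> bool" where
  "k_uniform_hypergraph k V E \<longleftrightarrow> finite V \<and> (\<forall>e\<in>E. e \<subseteq> V \<and> card e = k)"

text \<open>The ILTH process: (V t, E t) is H_t; clone t x is the clone x' of
x \<in> V t, added at step t+1.  Clones are new vertices, pairwise distinct.\<close>
definition ilth_process ::
  "'v set \<Rightarrow> 'v set set \<Rightarrow> (nat \<Rightarrow> 'v set) \<Rightarrow> (nat \<Rightarrow> 'v set set) \<Rightarrow> (nat \<Rightarrow> 'v \<Rightarrow> 'v) \<Rightarrow> bool"
where
  "ilth_process V0 E0 V E clone \<longleftrightarrow>
     V 0 = V0 \<and> E 0 = E0 \<and>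
     (\<forall>t. inj_on (clone t) (V t) \<and> clone t ` V t \<inter> V t = {} \<and>
          V (Suc t) = V t \<union> clone t ` V t \<and>
          E (Suc t) = E t \<union> {insert (clone t x) (e - {x}) | e x. e \<in> E t \<and> x \<in> e})"

text \<open>The seven regions of (e1,e2,e3), in the order of the paper; entry j is
True iff the j-th region is nonempty.\<close>
definition region_string :: "'v set \<Rightarrow> 'v set \<Rightarrow> 'v set \<Rightarrow> bool list" where
  "region_string e1 e2 e3 =
     [e1 - (e2 \<union> e3) \<noteq> {}, e2 - (e1 \<union> e3) \<noteq> {}, e3 - (e1 \<union> e2) \<noteq> {},
      (e1 \<inter> e2) - e3 \<noteq> {}, (e2 \<inter> e3) - e1 \<noteq> {}, (e1 \<inter> e3) - e2 \<noteq> {},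
      e1 \<inter> e2 \<inter> e3 \<noteq> {}]"

definition motif_has_type :: "'v set set \<Rightarrow> bool list \<Rightarrow> bool" where
  "motif_has_type M s \<longleftrightarrow>
     (\<exists>e1 e2 e3. M = {e1, e2, e3} \<and> e1 \<noteq> e2 \<and> e2 \<noteq> e3 \<and> e1 \<noteq> e3 \<and>
                 region_string e1 e2 e3 = s)"

definition type_string :: "nat \<Rightarrow> bool list" where
  "type_string i =
     (if i = 13 then [False, False, False, True, True, True, True]
      else if i = 14 then [True, False, False, True, True, True, True]
      else if i = 15 then [True, False, True, True, True, True, True]
      else if i = 24 then [True, False, False, True, True, True, False]
      else if i = 25 then [True, False, True, True, True, True, False]
      else [])"

definition motifs_of_type :: "'v set set \<Rightarrow> nat \<Rightarrow> 'v set set set" where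
  "motifs_of_type E i = {M. M \<subseteq> E \<and> card M = 3 \<and> motif_has_type M (type_string i)}"

end

theory Submission
  imports Defs
begin

text \<open>Every motif M of H_t on m vertices is still a motif of H_(t+1), and for each
vertex x of M, replacing x by its clone x' in every hyperedge of M gives another one.
This replacement is injective on the vertices of M, so it preserves both the type and
the number of vertices. The m new motifs differ from all motifs of H_t and from each
other, because each contains exactly one new vertex, namely x'. Hence the number of
type-i motifs on m vertices grows by a factor of at least m + 1 per step. The argument
works for every type string and every k.\<close>

lemma region_string_image:
  assumes "inj_on f (A \<union> B \<union> C)"
  shows "region_string (f ` A) (f ` B) (f ` C) = region_string A B C"
  using assms unfolding region_string_def inj_on_def by simp blast

lemma motif_has_type_image:
  assumes "inj_on f (\<Union>M)" and "motif_has_type M s"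
  shows "motif_has_type ((`) f ` M) s"
proof -
  obtain e1 e2 e3 where M: "M = {e1, e2, e3}" and distinct: "e1 \<noteq> e2" "e2 \<noteq> e3" "e1 \<noteq> e3"
    and s: "region_string e1 e2 e3 = s"
    using assms(2) unfolding motif_has_type_def by blast
  have inj: "inj_on f (e1 \<union> e2 \<union> e3)"
    using assms(1) M by (simp add: Un_assoc)
  have "inj_on ((`) f) M"
    using assms(1) by (rule inj_on_image)
  then have "f ` e1 \<noteq> f ` e2" "f ` e2 \<noteq> f ` e3" "f ` e1 \<noteq> f ` e3"
    using M distinct by (auto simp: inj_on_def)
  moreover have "(`) f ` M = {f ` e1, f ` e2, f ` e3}"
    using M by simp
  ultimately show ?thesis
    using region_string_image[OF inj] s unfolding motif_has_type_def by metis
qed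

definition motifs_of_order :: "'v set set \<Rightarrow> nat \<Rightarrow> nat \<Rightarrow> 'v set set set" where
  "motifs_of_order E i m = {M \<in> motifs_of_type E i. card (\<Union>M) = m}"

lemma motifs_of_order_mono: "E \<subseteq> E' \<Longrightarrow> motifs_of_order E i m \<subseteq> motifs_of_order E' i m"
  by (auto simp: motifs_of_order_def motifs_of_type_def)

lemma Union_motif_subset: "E \<subseteq> Pow V \<Longrightarrow> M \<in> motifs_of_type E i \<Longrightarrow> \<Union>M \<subseteq> V"
  by (auto simp: motifs_of_type_def)

lemma motifs_of_order_subset: "motifs_of_order E i m \<subseteq> motifs_of_type E i"
  by (simp add: motifs_of_order_def)

lemma finite_motifs_of_type: "finite V \<Longrightarrow> E \<subseteq> Pow V \<Longrightarrow> finite (motifs_of_type E i)"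
  by (rule finite_subset[of _ "Pow (Pow V)"]) (auto simp: motifs_of_type_def)

definition rename_to_clone :: "('v \<Rightarrow> 'v) \<Rightarrow> 'v \<Rightarrow> 'v \<Rightarrow> 'v" where
  "rename_to_clone c x v = (if v = x then c x else v)"

definition clone_motif :: "('v \<Rightarrow> 'v) \<Rightarrow> 'v \<Rightarrow> 'v set set \<Rightarrow> 'v set set" where
  "clone_motif c x M = (`) (rename_to_clone c x) ` M"

lemma image_rename_to_clone:
  "rename_to_clone c x ` e = (if x \<in> e then insert (c x) (e - {x}) else e)"
  by (auto simp: rename_to_clone_def)

lemma Union_clone_motif: "\<Union>(clone_motif c x M) = rename_to_clone c x ` \<Union>M"
  by (auto simp: clone_motif_def)

lemma clone_mem_Union_clone_motif: "x \<in> \<Union>M \<Longrightarrow> c x \<in> \<Union>(clone_motif c x M)"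
  unfolding Union_clone_motif by (rule image_eqI[of _ _ x]) (simp_all add: rename_to_clone_def)

lemma Union_clone_motif_subset: "\<Union>(clone_motif c x M) \<subseteq> insert (c x) (\<Union>M)"
  unfolding Union_clone_motif by (auto simp: rename_to_clone_def)

locale clone_step =
  fixes V :: "'v set" and E :: "'v set set" and c :: "'v \<Rightarrow> 'v" and E' :: "'v set set"
  assumes finite_V: "finite V"
    and edges_in_V: "E \<subseteq> Pow V"
    and inj_clone: "inj_on c V"
    and clones_new: "c ` V \<inter> V = {}"
    and edges_step: "E' = E \<union> {insert (c x) (e - {x}) | e x. e \<in> E \<and> x \<in> e}"
begin

lemma clone_notin: "x \<in> V \<Longrightarrow> c x \<notin> V"
  using clones_new by blast

lemma edges_subset: "E \<subseteq> E'"
  using edges_step by blast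

lemma edges'_in_Pow: "E' \<subseteq> Pow (V \<union> c ` V)"
  using edges_in_V unfolding edges_step by blast

lemma Union_motif_subset_V: "M \<in> motifs_of_type E i \<Longrightarrow> \<Union>M \<subseteq> V"
  using edges_in_V by (rule Union_motif_subset)

lemma finite_motifs: "finite (motifs_of_type E i)"
  using finite_V edges_in_V by (rule finite_motifs_of_type)

lemma finite_motifs': "finite (motifs_of_type E' i)"
  using finite_V edges'_in_Pow by (intro finite_motifs_of_type) auto

lemma inj_on_rename_to_clone: "x \<in> V \<Longrightarrow> inj_on (rename_to_clone c x) V"
  using clone_notin inj_clone unfolding inj_on_def rename_to_clone_def by auto

lemma rename_to_clone_edge: "e \<in> E \<Longrightarrow> rename_to_clone c x ` e \<in> E'"
  unfolding image_rename_to_clone edges_step by auto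

lemma clone_motif_mem:
  assumes M: "M \<in> motifs_of_order E i m" and x: "x \<in> \<Union>M"
  shows "clone_motif c x M \<in> motifs_of_order E' i m"
proof -
  have M_in: "M \<subseteq> E" "card M = 3" "motif_has_type M (type_string i)" "card (\<Union>M) = m"
    using M by (auto simp: motifs_of_order_def motifs_of_type_def)
  have "\<Union>M \<subseteq> V"
    using M motifs_of_order_subset Union_motif_subset_V by blast
  then have inj: "inj_on (rename_to_clone c x) (\<Union>M)"
    using x by (blast intro: inj_on_subset inj_on_rename_to_clone)
  have "clone_motif c x M \<subseteq> E'"
    using M_in(1) rename_to_clone_edge by (auto simp: clone_motif_def)
  moreover have "card (clone_motif c x M) = 3"
    using card_image[OF inj_on_image[OF inj]] M_in(2) by (simp add: clone_motif_def)
  moreover have "motif_has_type (clone_motif c x M) (type_string i)"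
    unfolding clone_motif_def using inj M_in(3) by (rule motif_has_type_image)
  moreover have "card (\<Union>(clone_motif c x M)) = m"
    using card_image[OF inj] M_in(4) by (simp add: Union_clone_motif)
  ultimately show ?thesis
    by (simp add: motifs_of_order_def motifs_of_type_def)
qed

lemma clone_motif_notin:
  assumes "M \<in> motifs_of_type E i" and "x \<in> \<Union>M"
  shows "clone_motif c x M \<notin> motifs_of_type E i"
proof
  assume "clone_motif c x M \<in> motifs_of_type E i"
  then have "c x \<in> V"
    using clone_mem_Union_clone_motif[OF assms(2)] Union_motif_subset_V by blast
  moreover have "x \<in> V"
    using assms Union_motif_subset_V by blast
  ultimately show False
    using clone_notin by blast
qed

lemma clone_motif_inject:
  assumes M: "M \<in> motifs_of_type E i" "x \<in> \<Union>M" and N: "N \<in> motifs_of_type E i" "y \<in> \<Union>N"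
    and eq: "clone_motif c x M = clone_motif c y N"
  shows "M = N \<and> x = y"
proof -
  have V: "\<Union>M \<subseteq> V" "\<Union>N \<subseteq> V"
    using M(1) N(1) by (simp_all add: Union_motif_subset_V)
  have x_V: "x \<in> V" and y_V: "y \<in> V"
    using M(2) N(2) V by blast+
  have "c x \<in> \<Union>(clone_motif c y N)"
    using clone_mem_Union_clone_motif[of x M c] M(2) eq by simp
  then have "c x \<in> insert (c y) (\<Union>N)"
    using Union_clone_motif_subset[of c y N] by blast
  then have "c x = c y"
    using clone_notin[OF x_V] V(2) by blast
  then have xy: "x = y"
    using inj_onD[OF inj_clone _ x_V y_V] by simp
  have "inj_on ((`) (rename_to_clone c x)) (Pow V)"
    using inj_on_image_Pow[OF inj_on_rename_to_clone[OF x_V]] .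
  moreover have "M \<subseteq> Pow V" "N \<subseteq> Pow V"
    using M(1) N(1) edges_in_V by (auto simp: motifs_of_type_def)
  ultimately have "M = N"
    using eq xy by (simp add: clone_motif_def inj_on_image_eq_iff)
  then show ?thesis
    using xy by simp
qed

lemma inj_on_clone_motif:
  "inj_on (\<lambda>(M, x). clone_motif c x M) (SIGMA M:motifs_of_type E i. \<Union>M)"
  by (auto intro!: inj_onI dest: clone_motif_inject)

theorem card_motifs_of_order_step:
  "(m + 1) * card (motifs_of_order E i m) \<le> card (motifs_of_order E' i m)"
proof -
  define S where "S = motifs_of_order E i m"
  define Clones where "Clones = (\<lambda>(M, x). clone_motif c x M) ` (SIGMA M:S. \<Union>M)"
  have S_motifs: "S \<subseteq> motifs_of_type E i"
    unfolding S_def by (rule motifs_of_order_subset)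
  have finite_S: "finite S"
    using S_motifs finite_motifs by (rule finite_subset)
  have Union_S: "finite (\<Union>M)" "card (\<Union>M) = m" if "M \<in> S" for M
    using that S_motifs finite_subset[OF Union_motif_subset_V finite_V]
    by (auto simp: S_def motifs_of_order_def)
  have "card Clones = card (SIGMA M:S. \<Union>M)"
    unfolding Clones_def
    by (rule card_image, rule inj_on_subset[OF inj_on_clone_motif]) (use S_motifs in blast)
  also have "\<dots> = m * card S"
    using finite_S Union_S by (simp add: card_SigmaI)
  finally have card_Clones: "card Clones = m * card S" .
  have "finite Clones"
    unfolding Clones_def using finite_S Union_S(1) by blast
  moreover have "S \<inter> Clones = {}"
    using clone_motif_notin S_motifs by (auto simp: Clones_def)
  moreover have "S \<union> Clones \<subseteq> motifs_of_order E' i m"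
    using motifs_of_order_mono[OF edges_subset]
    by (auto simp: S_def Clones_def intro: clone_motif_mem)
  moreover have "finite (motifs_of_order E' i m)"
    using motifs_of_order_subset finite_motifs' by (rule finite_subset)
  ultimately have "card S + card Clones \<le> card (motifs_of_order E' i m)"
    using finite_S by (metis card_Un_disjoint card_mono)
  then show ?thesis
    using card_Clones by (simp add: S_def)
qed

end

lemma ilth_process_clone_step_if:
  assumes "ilth_process V0 E0 V E clone" and "finite (V t)" and "E t \<subseteq> Pow (V t)"
  shows "clone_step (V t) (E t) (clone t) (E (Suc t))"
  using assms by unfold_locales (simp_all add: ilth_process_def)

lemma ilth_process_finite_Pow:
  assumes "k_uniform_hypergraph k V0 E0" and ilth: "ilth_process V0 E0 V E clone"
  shows "finite (V t) \<and> E t \<subseteq> Pow (V t)"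
proof (induction t)
  case 0
  then show ?case
    using assms by (auto simp: k_uniform_hypergraph_def ilth_process_def)
next
  case (Suc t)
  then interpret clone_step "V t" "E t" "clone t" "E (Suc t)"
    using ilth by (blast intro: ilth_process_clone_step_if)
  have "V (Suc t) = V t \<union> clone t ` V t"
    using ilth by (simp add: ilth_process_def)
  then show ?case
    using finite_V edges'_in_Pow by simp
qed

lemma ilth_process_clone_step:
  assumes "k_uniform_hypergraph k V0 E0" and "ilth_process V0 E0 V E clone"
  shows "clone_step (V t) (E t) (clone t) (E (Suc t))"
  using assms(2) ilth_process_finite_Pow[OF assms] by (blast intro: ilth_process_clone_step_if)

theorem theorem3p5:
  fixes k :: nat and V0 :: "'v set" and E0 :: "'v set set"
    and V :: "nat \<Rightarrow> 'v set" and E :: "nat \<Rightarrow> 'v set set" and clone :: "nat \<Rightarrow> 'v \<Rightarrow> 'v"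
    and i m :: nat
  assumes "k \<ge> 2"
    and "k_uniform_hypergraph k V0 E0"
    and "ilth_process V0 E0 V E clone"
    and "i \<in> {13, 14, 15, 24, 25}"
    and "M0 \<in> motifs_of_type E0 i"
    and "m = card (\<Union>M0)"
  shows "\<forall>t. card (motifs_of_type (E t) i) \<ge> (m + 1) ^ t"
proof -
  have step: "clone_step (V t) (E t) (clone t) (E (Suc t))" for t
    using assms(2,3) by (rule ilth_process_clone_step)
  have growth: "(m + 1) ^ t \<le> card (motifs_of_order (E t) i m)" for t
  proof (induction t)
    case 0
    have "M0 \<in> motifs_of_order (E 0) i m"
      using assms(3,5,6) by (simp add: ilth_process_def motifs_of_order_def)
    moreover have "finite (motifs_of_order (E 0) i m)"
      using motifs_of_order_subset clone_step.finite_motifs[OF step] by (rule finite_subset)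
    ultimately show ?case
      by (auto simp: Suc_le_eq card_gt_0_iff)
  next
    case (Suc t)
    then show ?case
      using clone_step.card_motifs_of_order_step[OF step, of m t i]
      by (metis mult_le_mono2 order_trans power_Suc)
  qed
  have "card (motifs_of_order (E t) i m) \<le> card (motifs_of_type (E t) i)" for t
    using clone_step.finite_motifs[OF step] motifs_of_order_subset by (rule card_mono)
  then show ?thesis
    using growth order_trans by blast
qed

end
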